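(* Let $A$ be a finite alphabet and $d: A^n \to A$ a block map. Then $d$ is regressive if and only if the induced sliding block code $\tau_d: A^{\mathbb{N}} \to A^{\mathbb{N}}$ $*$-commutes with the shift map $\sigma$.
   Context: $A$ is a finite set; $\mathbb{N}=\{1,2,3,\dots\}$; $A^{\mathbb{N}}$ is the set of one-sided infinite sequences $x=x_1x_2\cdots$ over $A$; $\sigma(x_1x_2x_3\cdots)=x_2x_3\cdots$. A block map is a function $d: A^n \to A$, and $\tau_d: A^{\mathbb{N}}\to A^{\mathbb{N}}$ is defined by $\tau_d(x)_i = d(x_i \cdots x_{i+n-1})$. The block map $d$ is regressive if for each fixed $x_1 \cdots x_{n-1} \in A^{n-1}$ the function $A\to A$, $a\mapsto d(a x_1 \cdots x_{n-1})$, is bijective. Two functions $S,T: X\to X$ on a set $X$ $*$-commute if $ST=TS$ and for every $(y,z)\in X\times X$ with $S(y)=T(z)$ there exists a unique $x\in X$ with $T(x)=y$ and $S(x)=z$. *)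

theory Defs
  imports Main
begin

text \<open>One-sided sequences x_1 x_2 ... over A are modelled as functions nat => 'a
  (index shifted to start at 0). Words in A^n are lists of length n.\<close>

definition shift :: "(nat \<Rightarrow> 'a) \<Rightarrow> (nat \<Rightarrow> 'a)" where
  "shift x = (\<lambda>i. x (Suc i))"

definition tau :: "nat \<Rightarrow> ('a list \<Rightarrow> 'a) \<Rightarrow> (nat \<Rightarrow> 'a) \<Rightarrow> (nat \<Rightarrow> 'a)" where
  "tau n d x = (\<lambda>i. d (map (\<lambda>j. x (i + j)) [0..<n]))"

definition regressive :: "nat \<Rightarrow> ('a list \<Rightarrow> 'a) \<Rightarrow> bool" where
  "regressive n d \<longleftrightarrow> (\<forall>w. length w = n - 1 \<longrightarrow> bij (\<lambda>a. d (a # w)))"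

definition star_commute :: "('b \<Rightarrow> 'b) \<Rightarrow> ('b \<Rightarrow> 'b) \<Rightarrow> bool" where
  "star_commute S T \<longleftrightarrow> S \<circ> T = T \<circ> S \<and>
     (\<forall>y z. S y = T z \<longrightarrow> (\<exists>!x. T x = y \<and> S x = z))"

end

theory Submission
  imports Defs
begin

(* The preimages of y under the shift are the sequences a y with a in A. If tau y = sigma z, then
   tau (a y) agrees with z from the second position on, and its first letter is d (a y_1 ... y_{n-1}).
   So the unique-lifting condition for (y, z) says exactly that a |-> d (a y_1 ... y_{n-1}) takes
   the value z_1 exactly once; since y_1 ... y_{n-1} and z_1 can be prescribed freely, this is
   regressivity. *)

lemma tau_comp_shift: "tau n d \<circ> shift = shift \<circ> tau n d"
  by (simp add: tau_def shift_def fun_eq_iff)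

lemma shift_case_nat [simp]: "shift (case_nat a y) = y"
  by (simp add: shift_def)

lemma case_nat_shift [simp]: "case_nat (x 0) (shift x) = x"
  by (simp add: shift_def fun_eq_iff split: nat.split)

lemma shift_eq_iff_case_nat: "shift x = y \<longleftrightarrow> x = case_nat (x 0) y"
  by (metis case_nat_shift shift_case_nat)

lemma ex1_shift_preimage_iff:
  "(\<exists>!x. shift x = y \<and> P x) \<longleftrightarrow> (\<exists>!a. P (case_nat a y))"
proof
  assume "\<exists>!x. shift x = y \<and> P x"
  then obtain x where x: "shift x = y" "P x" and uniq: "\<And>x'. shift x' = y \<and> P x' \<Longrightarrow> x' = x"
    by blast
  show "\<exists>!a. P (case_nat a y)"
  proof (rule ex1I)
    show "P (case_nat (x 0) y)"
      using x case_nat_shift[of x] by simp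
  next
    fix a
    assume "P (case_nat a y)"
    then have "case_nat a y = x"
      by (intro uniq) simp
    then show "a = x 0"
      by auto
  qed
next
  assume "\<exists>!a. P (case_nat a y)"
  then obtain a where a: "P (case_nat a y)" and uniq: "\<And>a'. P (case_nat a' y) \<Longrightarrow> a' = a"
    by blast
  show "\<exists>!x. shift x = y \<and> P x"
  proof (rule ex1I)
    show "shift (case_nat a y) = y \<and> P (case_nat a y)"
      using a by simp
  next
    fix x
    assume "shift x = y \<and> P x"
    then have "x = case_nat (x 0) y" and "P (case_nat (x 0) y)"
      using shift_eq_iff_case_nat by metis+
    then show "x = case_nat a y"
      using uniq by metis
  qed
qed

lemma tau_0:
  assumes "n \<ge> 1"
  shows "tau n d x 0 = d (x 0 # map (shift x) [0..<n - 1])"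
proof -
  have "[0..<n] = 0 # map Suc [0..<n - 1]"
    using assms by (cases n) (auto simp: upt_conv_Cons map_Suc_upt)
  then show ?thesis
    by (simp add: tau_def shift_def o_def)
qed

lemma shift_tau: "shift (tau n d x) = tau n d (shift x)"
  using tau_comp_shift by (metis comp_apply)

lemma tau_case_nat_eq_iff:
  assumes "n \<ge> 1" and "tau n d y = shift z"
  shows "tau n d (case_nat a y) = z \<longleftrightarrow> d (a # map y [0..<n - 1]) = z 0"
proof -
  have "shift (tau n d (case_nat a y)) = shift z"
    using assms(2) by (simp add: shift_tau)
  then have "tau n d (case_nat a y) = z \<longleftrightarrow> tau n d (case_nat a y) 0 = z 0"
    by (metis shift_eq_iff_case_nat)
  then show ?thesis
    using tau_0[OF assms(1), of d "case_nat a y"] by simp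
qed

lemma star_commute_tau_shift_iff:
  assumes "n \<ge> 1"
  shows "star_commute (tau n d) shift \<longleftrightarrow>
    (\<forall>y z. tau n d y = shift z \<longrightarrow> (\<exists>!a. d (a # map y [0..<n - 1]) = z 0))"
  by (simp add: star_commute_def tau_comp_shift ex1_shift_preimage_iff
      tau_case_nat_eq_iff[OF assms] cong: imp_cong)

theorem theorem4p9:
  fixes d :: "'a::finite list \<Rightarrow> 'a" and n :: nat
  assumes "n \<ge> 1"
  shows "regressive n d \<longleftrightarrow> star_commute (tau n d) shift"
proof -
  have "regressive n d \<longleftrightarrow> (\<forall>w. length w = n - 1 \<longrightarrow> (\<forall>b. \<exists>!a. d (a # w) = b))"
    by (simp add: regressive_def bij_iff)
  also have "\<dots> \<longleftrightarrow> (\<forall>y z. tau n d y = shift z \<longrightarrow> (\<exists>!a. d (a # map y [0..<n - 1]) = z 0))"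
  proof (intro iffI allI impI)
    fix w :: "'a list" and b
    assume lifting: "\<forall>y z. tau n d y = shift z \<longrightarrow> (\<exists>!a. d (a # map y [0..<n - 1]) = z 0)"
      and "length w = n - 1"
    then have "map ((!) w) [0..<n - 1] = w"
      by (simp add: list_eq_iff_nth_eq)
    then show "\<exists>!a. d (a # w) = b"
      using lifting[rule_format, of "(!) w" "case_nat b (tau n d ((!) w))"] by simp
  qed simp
  also have "\<dots> \<longleftrightarrow> star_commute (tau n d) shift"
    by (rule star_commute_tau_shift_iff[OF assms, symmetric])
  finally show ?thesis .
qed

end
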